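(* Let $X$ be a non-negative continuous NBU random variable with distribution function $F$ and $\overline F(t)>0$ for all $t\ge0$, and let $K>0$. Let $N^{MR}(t)$ be the number of failures in $[0,t]$ of a unit with lifetime distribution $F$ under a minimal repair policy, and $N^{A,K}(t)$ the number of failures in $[0,t]$ under an age replacement policy with replacement interval $K$. Then $N^{MR}(t)\ge_{\mathrm{st}}N^{A,K}(t)$ for all $t\ge0$.
   Context: Minimal repair policy: failure times $T^{MR}_1\sim F$ and, for $i\ge2$, conditionally on $T^{MR}_1=t_1,\ldots,T^{MR}_{i-1}=t_{i-1}$, $P(T^{MR}_i>t\mid\cdot)=\overline F(t)/\overline F(t_{i-1})$ for $t\ge t_{i-1}$; $N^{MR}(t)=\sup\{n:T^{MR}_n\le t\}$. Age replacement policy with interval $K$: a unit is replaced by a new independent unit with distribution $F$ upon failure or upon reaching age $K$, whichever occurs first; $N^{A,K}(t)$ counts only failures (not planned replacements) in $[0,t]$. NBU: $X\ge_{\mathrm{st}}[X-t\mid X>t]$ for all $t\ge0$. $U\le_{\mathrm{st}}V$ means $P(U>s)\le P(V>s)$ for all $s$. *)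

theory Defs
  imports "HOL-Probability.Probability"
begin

definition survival :: "(real \<Rightarrow> real) \<Rightarrow> real \<Rightarrow> real" where
  "survival F t = 1 - F t"

definition has_cdf :: "'a measure \<Rightarrow> ('a \<Rightarrow> real) \<Rightarrow> (real \<Rightarrow> real) \<Rightarrow> bool" where
  "has_cdf M X F \<longleftrightarrow> X \<in> borel_measurable M \<and>
     (\<forall>t. measure M {\<omega> \<in> space M. X \<omega> \<le> t} = F t)"

text \<open>NBU: X is stochastically larger than [X - t | X > t] for every t \<ge> 0,
  i.e. P(X - t > s | X > t) \<le> P(X > s) for all s (elementary conditional probability).\<close>
definition NBU :: "'a measure \<Rightarrow> ('a \<Rightarrow> real) \<Rightarrow> bool" where
  "NBU M X \<longleftrightarrow> (\<forall>t\<ge>0. \<forall>s.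
     measure M {\<omega> \<in> space M. X \<omega> - t > s \<and> X \<omega> > t} / measure M {\<omega> \<in> space M. X \<omega> > t}
       \<le> measure M {\<omega> \<in> space M. X \<omega> > s})"

definition past_algebra :: "'a measure \<Rightarrow> (nat \<Rightarrow> 'a \<Rightarrow> real) \<Rightarrow> nat \<Rightarrow> 'a measure" where
  "past_algebra M T i = sigma (space M)
     (\<Union>j\<in>{1..<i}. {T j -` A \<inter> space M | A. A \<in> sets borel})"

text \<open>Minimal repair process with lifetime distribution F (failure times T 1, T 2, ...;
  T 0 is unused).\<close>
definition minimal_repair :: "'a measure \<Rightarrow> (real \<Rightarrow> real) \<Rightarrow> (nat \<Rightarrow> 'a \<Rightarrow> real) \<Rightarrow> bool" where
  "minimal_repair M F T \<longleftrightarrow>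
     (\<forall>i\<ge>1. T i \<in> borel_measurable M) \<and>
     has_cdf M (T 1) F \<and>
     (\<forall>i\<ge>2. \<forall>t. AE \<omega> in M. T (i - 1) \<omega> \<le> t \<longrightarrow>
        real_cond_exp M (past_algebra M T i) (indicator {\<omega> \<in> space M. T i \<omega> > t}) \<omega>
          = survival F t / survival F (T (i - 1) \<omega>))"

definition N_MR :: "(nat \<Rightarrow> 'a \<Rightarrow> real) \<Rightarrow> real \<Rightarrow> 'a \<Rightarrow> nat" where
  "N_MR T t \<omega> = Sup (insert 0 {n. 1 \<le> n \<and> T n \<omega> \<le> t})"

text \<open>Age replacement with interval K driven by i.i.d. lifetimes Y 0, Y 1, ...:
  unit j is installed at time S j = sum_{i<j} min (Y i) K and fails (a counted event)
  iff Y j \<le> K, at time S j + Y j.\<close>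
definition N_AR :: "real \<Rightarrow> (nat \<Rightarrow> 'a \<Rightarrow> real) \<Rightarrow> real \<Rightarrow> 'a \<Rightarrow> nat" where
  "N_AR K Y t \<omega> = card {j. Y j \<omega> \<le> K \<and> (\<Sum>i<j. min (Y i \<omega>) K) + Y j \<omega> \<le> t}"

definition iid_lifetimes :: "'a measure \<Rightarrow> (real \<Rightarrow> real) \<Rightarrow> (nat \<Rightarrow> 'a \<Rightarrow> real) \<Rightarrow> bool" where
  "iid_lifetimes M F Y \<longleftrightarrow> prob_space.indep_vars M (\<lambda>_. borel) Y UNIV \<and> (\<forall>j. has_cdf M (Y j) F)"

end

(*
  Let S_k be a sum of k independent lifetimes with law F, F^{*k} its distribution function
  (conv_cdf) and Fbar = 1 - F. Both counting processes are compared through F^{*k}: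
  P(N^{A,K}(t) >= k) <= F^{*k}(t) <= P(T_k <= t) <= P(N^{MR}(t) >= k).

  Age replacement: conditioning on the first lifetime Y, either Y <= K and the remaining units
  must produce k-1 failures in t - Y, or the unit is replaced at K and they must produce k failures
  in t - K. By NBU, Fbar(K) F^{*(k+1)}(t - K) <= P(Y > K, Y + S_k <= t), so the second alternative
  is no more likely than for a unit left running, and induction gives the first inequality.

  Minimal repair: P(T_{k+1} > t | past) = Fbar(t)/Fbar(T_k) <= Fbar(t - T_k) by NBU, hence
  P(T_{k+1} <= t) >= P(T_k + X <= t) for an independent X ~ F, and induction gives the second.
  Continuity of F is only used to show that the T_k are almost surely nondecreasing, and the
  bound P(T_k <= t) <= F(t)^k makes N^{MR}(t) almost surely finite.
*)
theory Submission
  imports Defs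
begin

lemma (in prob_space) emeasure_indep_pred_le:
  assumes indep: "indep_var N U N' Z"
    and P: "Measurable.pred (N \<Otimes>\<^sub>M N') (\<lambda>(x, z). P x z)"
    and g: "g \<in> borel_measurable N"
    and le: "\<And>x. x \<in> space N \<Longrightarrow> emeasure M {\<omega> \<in> space M. P x (Z \<omega>)} \<le> g x"
  shows "emeasure M {\<omega> \<in> space M. P (U \<omega>) (Z \<omega>)} \<le> (\<integral>\<^sup>+x. g x \<partial>distr M N U)"
proof -
  have U[measurable]: "random_variable N U" and Z[measurable]: "random_variable N' Z"
    and distr_pair: "distr M N U \<Otimes>\<^sub>M distr M N' Z = distr M (N \<Otimes>\<^sub>M N') (\<lambda>\<omega>. (U \<omega>, Z \<omega>))"
    using indep unfolding indep_var_distribution_eq by auto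
  interpret Z: prob_space "distr M N' Z"
    by (rule prob_space_distr) (rule Z)
  define S where "S = {p \<in> space (N \<Otimes>\<^sub>M N'). P (fst p) (snd p)}"
  have S: "S \<in> sets (N \<Otimes>\<^sub>M N')"
    using P unfolding S_def by (simp add: pred_def case_prod_beta)
  have "emeasure M {\<omega> \<in> space M. P (U \<omega>) (Z \<omega>)}
      = emeasure (distr M (N \<Otimes>\<^sub>M N') (\<lambda>\<omega>. (U \<omega>, Z \<omega>))) S"
    using S by (subst emeasure_distr)
      (auto simp: S_def space_pair_measure measurable_space[OF U] measurable_space[OF Z]
        intro!: arg_cong[where f="emeasure M"])
  also have "\<dots> = (\<integral>\<^sup>+x. emeasure (distr M N' Z) (Pair x -` S) \<partial>distr M N U)"
    using S by (simp add: distr_pair[symmetric] Z.emeasure_pair_measure_alt)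
  also have "\<dots> \<le> (\<integral>\<^sup>+x. g x \<partial>distr M N U)"
  proof (rule nn_integral_mono)
    fix x assume "x \<in> space (distr M N U)"
    moreover have "Pair x -` S \<in> sets N'"
      using S by (rule sets_Pair1)
    moreover have "Z -` Pair x -` S \<inter> space M = {\<omega> \<in> space M. P x (Z \<omega>)}"
      using \<open>x \<in> space (distr M N U)\<close> by (auto simp: S_def space_pair_measure measurable_space[OF Z])
    ultimately show "emeasure (distr M N' Z) (Pair x -` S) \<le> g x"
      using le[of x] by (simp add: emeasure_distr)
  qed
  finally show ?thesis .
qed

lemma (in prob_space) emeasure_head_tail_le:
  fixes Y :: "nat \<Rightarrow> 'a \<Rightarrow> real"
  assumes indep: "indep_vars (\<lambda>_. borel) Y UNIV"
    and P[measurable]: "Measurable.pred (borel \<Otimes>\<^sub>M PiM UNIV (\<lambda>_. borel)) (\<lambda>(x, z). P x z)"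
    and g[measurable]: "g \<in> borel_measurable borel"
    and le: "\<And>x. emeasure M {\<omega> \<in> space M. P x (\<lambda>j. Y (Suc n + j) \<omega>)} \<le> g x"
  shows "emeasure M {\<omega> \<in> space M. P (Y n \<omega>) (\<lambda>j. Y (Suc n + j) \<omega>)}
    \<le> (\<integral>\<^sup>+x. g x \<partial>distr M borel (Y n))"
proof -
  \<comment> \<open>\<open>indep_var\<close> needs both variables in the same space, so the head is encoded as a constant sequence.\<close>
  let ?B = "PiM UNIV (\<lambda>_::nat. borel :: real measure)"
  have [measurable]: "Y n \<in> borel_measurable M"
    using indep by (simp add: indep_vars_def)
  have "indep_var (PiM {n} (\<lambda>_. borel)) (\<lambda>\<omega>. restrict (\<lambda>i. Y i \<omega>) {n})
      (PiM {Suc n..} (\<lambda>_. borel)) (\<lambda>\<omega>. restrict (\<lambda>i. Y i \<omega>) {Suc n..})"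
    by (rule indep_var_restrict[OF indep]) auto
  then have "indep_var ?B ((\<lambda>f (_::nat). f n) \<circ> (\<lambda>\<omega>. restrict (\<lambda>i. Y i \<omega>) {n}))
      ?B ((\<lambda>f j. f (Suc n + j)) \<circ> (\<lambda>\<omega>. restrict (\<lambda>i. Y i \<omega>) {Suc n..}))"
    by (rule indep_var_compose) (auto intro!: measurable_PiM_single')
  then have "indep_var ?B (\<lambda>\<omega> _. Y n \<omega>) ?B (\<lambda>\<omega> j. Y (Suc n + j) \<omega>)"
    by (simp add: o_def)
  then have "emeasure M {\<omega> \<in> space M. P (Y n \<omega>) (\<lambda>j. Y (Suc n + j) \<omega>)}
      \<le> (\<integral>\<^sup>+f. g (f 0) \<partial>distr M ?B (\<lambda>\<omega> _. Y n \<omega>))"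
    by (rule emeasure_indep_pred_le[where P="\<lambda>f z. P (f 0) z"]) (auto intro: le[simplified])
  also have "\<dots> = (\<integral>\<^sup>+x. g x \<partial>distr M borel (Y n))"
    by (simp add: nn_integral_distr measurable_PiM_single')
  finally show ?thesis .
qed

text \<open>Valued in \<open>ennreal\<close>, so that the convolution recursion needs no integrability conditions.\<close>
fun conv_cdf :: "real measure \<Rightarrow> nat \<Rightarrow> real \<Rightarrow> ennreal" where
  "conv_cdf N 0 t = indicator {0..} t"
| "conv_cdf N (Suc k) t = (\<integral>\<^sup>+x. conv_cdf N k (t - x) \<partial>N)"

context real_distribution
begin

lemma measurable_cdf[measurable]: "cdf M \<in> borel_measurable borel"
  by (intro borel_measurable_mono monoI cdf_nondecreasing)

lemma measurable_conv_cdf[measurable]: "conv_cdf M k \<in> borel_measurable borel"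
proof (induction k)
  case (Suc k)
  then have "(\<lambda>(t, x). conv_cdf M k (t - x)) \<in> borel_measurable (borel \<Otimes>\<^sub>M M)"
    by measurable
  then show ?case
    using borel_measurable_nn_integral by fastforce
qed simp

lemma conv_cdf_one: "conv_cdf M (Suc 0) t = ennreal (cdf M t)"
proof -
  have "conv_cdf M (Suc 0) t = (\<integral>\<^sup>+x. indicator {..t} x \<partial>M)"
    by (auto intro!: nn_integral_cong simp: indicator_def)
  then show ?thesis
    by (simp add: cdf_def emeasure_eq_measure)
qed

lemma nn_integral_emeasure_le_diff:
  assumes "prob_space N" and [measurable]: "V \<in> borel_measurable N"
  shows "(\<integral>\<^sup>+x. emeasure N {\<omega> \<in> space N. V \<omega> \<le> t - x} \<partial>M)
    = (\<integral>\<^sup>+\<omega>. ennreal (cdf M (t - V \<omega>)) \<partial>N)"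
proof -
  define L where "L = distr N borel V"
  interpret L: prob_space L
    unfolding L_def using assms by (simp add: prob_space.prob_space_distr)
  interpret pair_sigma_finite L M
    by unfold_locales
  have [measurable_cong]: "sets L = sets borel"
    by (simp add: L_def)
  have "(\<integral>\<^sup>+x. emeasure N {\<omega> \<in> space N. V \<omega> \<le> t - x} \<partial>M)
      = (\<integral>\<^sup>+x. (\<integral>\<^sup>+v. indicator {..t} (v + x) \<partial>L) \<partial>M)"
  proof (rule nn_integral_cong)
    fix x
    have "(\<integral>\<^sup>+v. indicator {..t} (v + x) \<partial>L) = (\<integral>\<^sup>+v. indicator {..t - x} v \<partial>L)"
      by (intro nn_integral_cong) (auto simp: indicator_def)
    also have "\<dots> = emeasure L {..t - x}"
      by simp
    also have "\<dots> = emeasure N {\<omega> \<in> space N. V \<omega> \<le> t - x}"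
      unfolding L_def by (subst emeasure_distr) (auto simp: vimage_def Int_def conj_commute)
    finally show "emeasure N {\<omega> \<in> space N. V \<omega> \<le> t - x} = (\<integral>\<^sup>+v. indicator {..t} (v + x) \<partial>L)"
      by simp
  qed
  also have "\<dots> = (\<integral>\<^sup>+v. (\<integral>\<^sup>+x. indicator {..t} (v + x) \<partial>M) \<partial>L)"
    by (rule Fubini') measurable
  also have "\<dots> = (\<integral>\<^sup>+v. ennreal (cdf M (t - v)) \<partial>L)"
  proof (rule nn_integral_cong)
    fix v
    have "(\<integral>\<^sup>+x. indicator {..t} (v + x) \<partial>M) = (\<integral>\<^sup>+x. indicator {..t - v} x \<partial>M)"
      by (intro nn_integral_cong) (auto simp: indicator_def)
    then show "(\<integral>\<^sup>+x. indicator {..t} (v + x) \<partial>M) = ennreal (cdf M (t - v))"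
      by (simp add: cdf_def emeasure_eq_measure)
  qed
  also have "\<dots> = (\<integral>\<^sup>+\<omega>. ennreal (cdf M (t - V \<omega>)) \<partial>N)"
    unfolding L_def by (subst nn_integral_distr) auto
  finally show ?thesis .
qed

end

locale nbu_lifetime = real_distribution nu for nu :: "real measure" +
  assumes emeasure_negative: "emeasure nu {..<0} = 0"
    and survival_add_le:
      "\<And>a b. 0 \<le> a \<Longrightarrow> 0 \<le> b \<Longrightarrow> survival (cdf nu) (a + b) \<le> survival (cdf nu) a * survival (cdf nu) b"
begin

lemma cdf_negative: "t < 0 \<Longrightarrow> cdf nu t = 0"
proof -
  assume "t < 0"
  then have "cdf nu t \<le> measure nu {..<0}"
    unfolding cdf_def by (intro finite_measure_mono) auto
  also have "\<dots> = 0"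
    using emeasure_negative by (simp add: measure_def)
  finally show ?thesis
    using cdf_nonneg[of t] by linarith
qed

lemma emeasure_greaterThan: "emeasure nu {t<..} = ennreal (survival (cdf nu) t)"
proof -
  have "{t<..} = space nu - {..t}"
    by auto
  then show ?thesis
    using prob_compl[of "{..t}"] by (simp add: emeasure_eq_measure survival_def cdf_def)
qed

text \<open>Replacing a unit that survived age \<open>K\<close> by a new one can only delay the \<open>k+1\<close>-th failure.\<close>
lemma survival_mult_conv_cdf_le:
  assumes "0 \<le> K"
  shows "ennreal (survival (cdf nu) K) * conv_cdf nu (Suc k) (t - K)
    \<le> (\<integral>\<^sup>+y. indicator {K<..} y * conv_cdf nu k (t - y) \<partial>nu)"
proof (induction k arbitrary: t)
  case 0
  have rhs: "(\<integral>\<^sup>+y. indicator {K<..} y * conv_cdf nu 0 (t - y) \<partial>nu) = emeasure nu {K<..t}"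
  proof -
    have "(\<integral>\<^sup>+y. indicator {K<..} y * conv_cdf nu 0 (t - y) \<partial>nu) = (\<integral>\<^sup>+y. indicator {K<..t} y \<partial>nu)"
      by (auto intro!: nn_integral_cong simp: indicator_def)
    then show ?thesis
      by simp
  qed
  show ?case
  proof (cases "K \<le> t")
    case True
    have "survival (cdf nu) t \<le> survival (cdf nu) K * survival (cdf nu) (t - K)"
      using survival_add_le[of K "t - K"] True assms by simp
    then have "survival (cdf nu) K * cdf nu (t - K) \<le> cdf nu t - cdf nu K"
      by (simp add: survival_def algebra_simps)
    then show ?thesis
      unfolding conv_cdf_one rhs using True cdf_nonneg[of "t - K"] cdf_bounded_prob[of K]
      by (simp add: emeasure_Ioc survival_def ennreal_mult[symmetric] ennreal_minus ennreal_leI)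
  next
    case False
    then show ?thesis
      using cdf_negative[of "t - K"] by (simp only: conv_cdf_one) simp
  qed
next
  case (Suc k)
  interpret pair_sigma_finite nu nu
    by unfold_locales
  have "ennreal (survival (cdf nu) K) * conv_cdf nu (Suc (Suc k)) (t - K)
      = (\<integral>\<^sup>+x. ennreal (survival (cdf nu) K) * conv_cdf nu (Suc k) ((t - x) - K) \<partial>nu)"
    by (simp add: nn_integral_cmult algebra_simps)
  also have "\<dots> \<le> (\<integral>\<^sup>+x. (\<integral>\<^sup>+y. indicator {K<..} y * conv_cdf nu k ((t - x) - y) \<partial>nu) \<partial>nu)"
    by (intro nn_integral_mono Suc.IH)
  also have "\<dots> = (\<integral>\<^sup>+y. (\<integral>\<^sup>+x. indicator {K<..} y * conv_cdf nu k ((t - y) - x) \<partial>nu) \<partial>nu)"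
    by (subst Fubini') (auto simp: algebra_simps)
  also have "\<dots> = (\<integral>\<^sup>+y. indicator {K<..} y * conv_cdf nu (Suc k) (t - y) \<partial>nu)"
    by (simp add: nn_integral_cmult)
  finally show ?case .
qed

lemma cdf_diff_le_survival_ratio:
  assumes "0 \<le> x" and "x \<le> t" and "0 < survival (cdf nu) x"
  shows "cdf nu (t - x) \<le> 1 - survival (cdf nu) t / survival (cdf nu) x"
proof -
  have "survival (cdf nu) t \<le> survival (cdf nu) x * survival (cdf nu) (t - x)"
    using survival_add_le[of x "t - x"] assms by simp
  then have "survival (cdf nu) t / survival (cdf nu) x \<le> survival (cdf nu) (t - x)"
    using assms(3) by (simp add: divide_le_eq mult.commute)
  then show ?thesis
    by (simp add: survival_def)
qed

end

text \<open>\<open>ar_failures_ge K m k y t\<close>: under age replacement at age \<open>K\<close> with successive lifetimes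
  \<open>y 0, y 1, \<dots>\<close>, at least \<open>k\<close> of the first \<open>m\<close> units fail by time \<open>t\<close>.\<close>
fun ar_failures_ge :: "real \<Rightarrow> nat \<Rightarrow> nat \<Rightarrow> (nat \<Rightarrow> real) \<Rightarrow> real \<Rightarrow> bool" where
  "ar_failures_ge K m 0 y t = True"
| "ar_failures_ge K 0 (Suc k) y t = False"
| "ar_failures_ge K (Suc m) (Suc k) y t =
    (if y 0 \<le> K then y 0 \<le> t \<and> ar_failures_ge K m k (\<lambda>j. y (Suc j)) (t - y 0)
     else ar_failures_ge K m (Suc k) (\<lambda>j. y (Suc j)) (t - K))"

lemma measurable_ar_failures_ge[measurable]:
  assumes "f \<in> N \<rightarrow>\<^sub>M PiM UNIV (\<lambda>_. borel)" and "g \<in> borel_measurable N"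
  shows "Measurable.pred N (\<lambda>x. ar_failures_ge K m k (f x) (g x))"
  using assms
proof (induction m arbitrary: k f g)
  case 0
  then show ?case
    by (cases k) auto
next
  case (Suc m)
  note Suc.prems[measurable]
  have [measurable]: "(\<lambda>x j. f x (Suc j)) \<in> N \<rightarrow>\<^sub>M PiM UNIV (\<lambda>_. borel)"
    by (rule measurable_PiM_single') auto
  note Suc.IH[measurable]
  show ?case
    by (cases k) auto
qed

lemma ar_failures_ge_Suc: "ar_failures_ge K m k y t \<Longrightarrow> ar_failures_ge K (Suc m) k y t"
  by (induction K m k y t rule: ar_failures_ge.induct) (auto split: if_splits)

definition ar_failure_set :: "real \<Rightarrow> (nat \<Rightarrow> real) \<Rightarrow> real \<Rightarrow> nat set" where
  "ar_failure_set K y t = {j. y j \<le> K \<and> (\<Sum>i<j. min (y i) K) + y j \<le> t}"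

lemma N_AR_eq_card: "N_AR K Y t \<omega> = card (ar_failure_set K (\<lambda>j. Y j \<omega>) t)"
  by (simp add: N_AR_def ar_failure_set_def)

lemma ar_failure_set_shift:
  "ar_failure_set K y t = (if y 0 \<le> K \<and> y 0 \<le> t then {0} else {})
     \<union> Suc ` ar_failure_set K (\<lambda>j. y (Suc j)) (t - min (y 0) K)"
proof -
  have "(\<Sum>i<Suc j. min (y i) K) = min (y 0) K + (\<Sum>i<j. min (y (Suc i)) K)" for j
    by (subst sum.lessThan_Suc_shift) simp
  then have Suc_mem: "Suc j \<in> ar_failure_set K y t \<longleftrightarrow> j \<in> ar_failure_set K (\<lambda>j. y (Suc j)) (t - min (y 0) K)" for j
    by (auto simp: ar_failure_set_def algebra_simps)
  have "j \<in> ar_failure_set K y t \<longleftrightarrow>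
      j \<in> (if y 0 \<le> K \<and> y 0 \<le> t then {0} else {}) \<union> Suc ` ar_failure_set K (\<lambda>j. y (Suc j)) (t - min (y 0) K)" for j
    by (cases j) (auto simp: Suc_mem, auto simp: ar_failure_set_def)
  then show ?thesis
    by blast
qed

lemma ar_failure_set_negative:
  assumes "\<And>j. 0 \<le> y j" and "t < 0"
  shows "ar_failure_set K y t = {}"
proof -
  have "0 \<le> (\<Sum>i<j. min (y i) K) + y j" if "y j \<le> K" for j
    using assms(1) that by (auto intro!: add_nonneg_nonneg sum_nonneg order_trans[OF assms(1) that])
  then show ?thesis
    using assms(2) unfolding ar_failure_set_def by force
qed

lemma ar_failures_ge_if_le_card:
  assumes "\<And>j. 0 \<le> y j" and "ar_failure_set K y t \<subseteq> {..<m}" and "k \<le> card (ar_failure_set K y t)"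
  shows "ar_failures_ge K m k y t"
  using assms
proof (induction K m k y t rule: ar_failures_ge.induct)
  case (3 K m k y t)
  let ?S = "ar_failure_set K (\<lambda>j. y (Suc j)) (t - min (y 0) K)"
  have S_shift: "ar_failure_set K y t = (if y 0 \<le> K \<and> y 0 \<le> t then {0} else {}) \<union> Suc ` ?S"
    by (rule ar_failure_set_shift)
  have "?S \<subseteq> {..<m}"
    using "3.prems"(2) by (auto simp: S_shift)
  then have fin: "finite ?S"
    using finite_subset by blast
  consider "y 0 \<le> K" "y 0 \<le> t" | "y 0 \<le> K" "t < y 0" | "\<not> y 0 \<le> K"
    by linarith
  then show ?case
  proof cases
    case 1
    then have "card (ar_failure_set K y t) = Suc (card ?S)"
      using fin by (simp add: S_shift card_image image_iff)
    then show ?thesis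
      using 1 "3.IH"(1) "3.prems" \<open>?S \<subseteq> {..<m}\<close> by simp
  next
    case 2
    then have "?S = {}"
      using "3.prems"(1) by (intro ar_failure_set_negative) auto
    then show ?thesis
      using 2 "3.prems"(3) by (simp add: S_shift)
  next
    case 3
    then have "card (ar_failure_set K y t) = card ?S"
      by (simp add: S_shift card_image)
    then show ?thesis
      using 3 "3.IH"(2) "3.prems" \<open>?S \<subseteq> {..<m}\<close> by simp
  qed
qed auto

locale nbu_age_replacement = nbu_lifetime nu + M2: prob_space M2
  for nu :: "real measure" and M2 :: "'c measure" +
  fixes Y :: "nat \<Rightarrow> 'c \<Rightarrow> real" and K :: real
  assumes indep_Y: "M2.indep_vars (\<lambda>_. borel) Y UNIV"
    and distr_Y: "\<And>j. distr M2 borel (Y j) = nu"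
    and K_nonneg: "0 \<le> K"
begin

lemma measurable_Y[measurable]: "Y j \<in> borel_measurable M2"
  using indep_Y by (simp add: M2.indep_vars_def)

lemma AE_Y_nonneg: "AE \<omega> in M2. \<forall>j. 0 \<le> Y j \<omega>"
proof (subst AE_all_countable, intro allI)
  fix j
  have "emeasure M2 {\<omega> \<in> space M2. Y j \<omega> < 0} = emeasure (distr M2 borel (Y j)) {..<0}"
    by (subst emeasure_distr) (auto simp: vimage_def Int_def conj_commute)
  then have "emeasure M2 {\<omega> \<in> space M2. Y j \<omega> < 0} = 0"
    by (simp add: distr_Y emeasure_negative)
  then show "AE \<omega> in M2. 0 \<le> Y j \<omega>"
    by (subst AE_iff_measurable[where N="{\<omega> \<in> space M2. Y j \<omega> < 0}"]) auto
qed

lemma emeasure_ar_failures_ge_Suc_le: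
  assumes IH: "\<And>k t. emeasure M2 {\<omega> \<in> space M2. ar_failures_ge K m k (\<lambda>j. Y (Suc n + j) \<omega>) t}
    \<le> (if k = 0 then 1 else conv_cdf nu k t)"
  shows "emeasure M2 {\<omega> \<in> space M2. ar_failures_ge K (Suc m) (Suc k) (\<lambda>j. Y (n + j) \<omega>) t}
    \<le> conv_cdf nu (Suc k) t"
proof -
  let ?tail = "\<lambda>\<omega> j. Y (Suc n + j) \<omega>"
  have [measurable]: "?tail \<in> M2 \<rightarrow>\<^sub>M PiM UNIV (\<lambda>_. borel)"
    by (rule measurable_PiM_single') auto
  let ?fail = "{\<omega> \<in> space M2.
    Y n \<omega> \<le> K \<and> Y n \<omega> \<le> t \<and> ar_failures_ge K m k (?tail \<omega>) (t - Y n \<omega>)}"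
  let ?replace = "{\<omega> \<in> space M2. K < Y n \<omega> \<and> ar_failures_ge K m (Suc k) (?tail \<omega>) (t - K)}"
  have split: "{\<omega> \<in> space M2. ar_failures_ge K (Suc m) (Suc k) (\<lambda>j. Y (n + j) \<omega>) t} = ?fail \<union> ?replace"
    by (auto simp: not_le)
  have "emeasure M2 ?fail \<le> (\<integral>\<^sup>+y. indicator {..K} y * conv_cdf nu k (t - y) \<partial>distr M2 borel (Y n))"
  proof (rule M2.emeasure_head_tail_le[OF indep_Y])
    fix x
    show "emeasure M2 {\<omega> \<in> space M2. x \<le> K \<and> x \<le> t \<and> ar_failures_ge K m k (?tail \<omega>) (t - x)}
        \<le> indicator {..K} x * conv_cdf nu k (t - x)"
      using IH[of k "t - x"] by (cases "x \<le> t") (auto simp: indicator_def split: if_splits)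
  qed measurable
  also have "\<dots> = (\<integral>\<^sup>+y. indicator {..K} y * conv_cdf nu k (t - y) \<partial>nu)"
    by (simp add: distr_Y)
  finally have fail: "emeasure M2 ?fail \<le> \<dots>" .
  have "emeasure M2 ?replace
      \<le> (\<integral>\<^sup>+y. indicator {K<..} y * conv_cdf nu (Suc k) (t - K) \<partial>distr M2 borel (Y n))"
  proof (rule M2.emeasure_head_tail_le[OF indep_Y])
    fix x
    show "emeasure M2 {\<omega> \<in> space M2. K < x \<and> ar_failures_ge K m (Suc k) (?tail \<omega>) (t - K)}
        \<le> indicator {K<..} x * conv_cdf nu (Suc k) (t - K)"
      using IH[of "Suc k" "t - K"] by (auto simp: indicator_def)
  qed measurable
  also have "\<dots> = ennreal (survival (cdf nu) K) * conv_cdf nu (Suc k) (t - K)"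
    by (simp add: distr_Y nn_integral_multc emeasure_greaterThan mult.commute)
  also have "\<dots> \<le> (\<integral>\<^sup>+y. indicator {K<..} y * conv_cdf nu k (t - y) \<partial>nu)"
    by (rule survival_mult_conv_cdf_le[OF K_nonneg])
  finally have replace: "emeasure M2 ?replace \<le> \<dots>" .
  have "emeasure M2 {\<omega> \<in> space M2. ar_failures_ge K (Suc m) (Suc k) (\<lambda>j. Y (n + j) \<omega>) t}
      \<le> emeasure M2 ?fail + emeasure M2 ?replace"
    unfolding split by (rule emeasure_subadditive) measurable
  also have "\<dots> \<le> (\<integral>\<^sup>+y. indicator {..K} y * conv_cdf nu k (t - y) \<partial>nu)
      + (\<integral>\<^sup>+y. indicator {K<..} y * conv_cdf nu k (t - y) \<partial>nu)"
    using fail replace by (rule add_mono)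
  also have "\<dots> = conv_cdf nu (Suc k) t"
    by (subst nn_integral_add[symmetric]) (auto simp: indicator_def intro!: nn_integral_cong)
  finally show ?thesis .
qed

lemma emeasure_ar_failures_ge_le:
  "emeasure M2 {\<omega> \<in> space M2. ar_failures_ge K m k (\<lambda>j. Y (n + j) \<omega>) t}
    \<le> (if k = 0 then 1 else conv_cdf nu k t)"
proof (induction m arbitrary: n k t)
  case 0
  then show ?case
    by (cases k) (simp_all add: M2.emeasure_le_1)
next
  case (Suc m)
  then show ?case
    using emeasure_ar_failures_ge_Suc_le[OF Suc.IH] by (cases k) (simp_all add: M2.emeasure_le_1)
qed

lemma emeasure_N_AR_ge_le:
  assumes "1 \<le> k"
  shows "emeasure M2 {\<omega> \<in> space M2. k \<le> N_AR K Y t \<omega>} \<le> conv_cdf nu k t"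
proof -
  define A where "A m = {\<omega> \<in> space M2. ar_failures_ge K m k (\<lambda>j. Y j \<omega>) t}" for m
  have [measurable]: "(\<lambda>\<omega> j. Y j \<omega>) \<in> M2 \<rightarrow>\<^sub>M PiM UNIV (\<lambda>_. borel)"
    by (rule measurable_PiM_single') auto
  have A_sets: "A m \<in> sets M2" for m
    unfolding A_def by measurable
  have "emeasure M2 {\<omega> \<in> space M2. k \<le> N_AR K Y t \<omega>} \<le> emeasure M2 (\<Union>m. A m)"
  proof (rule emeasure_mono_AE)
    show "AE \<omega> in M2. \<omega> \<in> {\<omega> \<in> space M2. k \<le> N_AR K Y t \<omega>} \<longrightarrow> \<omega> \<in> (\<Union>m. A m)"
      using AE_Y_nonneg
    proof eventually_elim
      case (elim \<omega>)
      let ?S = "ar_failure_set K (\<lambda>j. Y j \<omega>) t"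
      show ?case
      proof
        assume \<omega>: "\<omega> \<in> {\<omega> \<in> space M2. k \<le> N_AR K Y t \<omega>}"
        then have "k \<le> card ?S"
          by (simp add: N_AR_eq_card)
        then have "finite ?S"
          using assms by (intro card_ge_0_finite) simp
        then have "?S \<subseteq> {..<Suc (Max ?S)}"
          by (auto simp: less_Suc_eq_le)
        then have "ar_failures_ge K (Suc (Max ?S)) k (\<lambda>j. Y j \<omega>) t"
          using elim \<open>k \<le> card ?S\<close> by (intro ar_failures_ge_if_le_card) auto
        then show "\<omega> \<in> (\<Union>m. A m)"
          using \<omega> by (auto simp: A_def)
      qed
    qed
  qed (use A_sets in auto)
  also have "\<dots> = (SUP m. emeasure M2 (A m))"
    using A_sets by (intro SUP_emeasure_incseq[symmetric] incseq_SucI) (auto simp: A_def ar_failures_ge_Suc)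
  also have "\<dots> \<le> conv_cdf nu k t"
    using emeasure_ar_failures_ge_le[of _ k 0 t] assms by (intro SUP_least) (simp add: A_def)
  finally show ?thesis .
qed

end

lemma distr_eq_if_has_cdf:
  assumes "prob_space M" and "real_distribution nu" and "has_cdf M Y (cdf nu)"
  shows "distr M borel Y = nu"
proof (rule cdf_unique)
  have [measurable]: "Y \<in> borel_measurable M"
    using assms(3) by (simp add: has_cdf_def)
  show "real_distribution (distr M borel Y)"
    using assms(1) by (simp add: prob_space.real_distribution_distr)
  show "cdf (distr M borel Y) = cdf nu"
    using assms(3) by (auto simp: cdf_def measure_distr has_cdf_def vimage_def Int_def conj_commute)
qed fact

lemma nbu_age_replacement_if_iid_lifetimes:
  assumes "nbu_lifetime nu" and "prob_space M2" and "iid_lifetimes M2 (cdf nu) Y" and "0 \<le> K"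
  shows "nbu_age_replacement nu M2 Y K"
proof (rule nbu_age_replacement.intro[OF assms(1,2)], unfold_locales)
  show "prob_space.indep_vars M2 (\<lambda>_. borel) Y UNIV" "distr M2 borel (Y j) = nu" for j
    using assms(3) distr_eq_if_has_cdf[OF assms(2) nbu_lifetime.axioms(1)[OF assms(1)]]
    by (simp_all add: iid_lifetimes_def)
qed fact

locale minimal_repair_process = M1: prob_space M1
  for M1 :: "'b measure" and F :: "real \<Rightarrow> real" and T :: "nat \<Rightarrow> 'b \<Rightarrow> real" +
  assumes minimal_repair: "minimal_repair M1 F T"
    and continuous_F: "continuous_on UNIV F"
    and survival_pos: "\<And>t. 0 < survival F t"
begin

lemma measurable_T[measurable]: "1 \<le> k \<Longrightarrow> T k \<in> borel_measurable M1"
  using minimal_repair by (simp add: minimal_repair_def)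

lemma measurable_survival[measurable]: "survival F \<in> borel_measurable borel"
  unfolding survival_def[abs_def] using continuous_F by (intro borel_measurable_diff borel_measurable_continuous_onI) auto

lemma measure_T1_le: "measure M1 {\<omega> \<in> space M1. T 1 \<omega> \<le> t} = F t"
  using minimal_repair by (simp add: minimal_repair_def has_cdf_def)

lemma F_nonneg: "0 \<le> F t"
  using measure_T1_le[of t] by (metis measure_nonneg)

lemma survival_le_1: "survival F t \<le> 1"
  using F_nonneg[of t] by (simp add: survival_def)

lemma survival_antimono: "s \<le> t \<Longrightarrow> survival F t \<le> survival F s"
  unfolding survival_def measure_T1_le[symmetric] by (simp add: M1.finite_measure_mono Collect_mono_iff)

lemma subalgebra_past_algebra: "subalgebra M1 (past_algebra M1 T i)"
proof -
  have "(\<Union>j\<in>{1..<i}. {T j -` A \<inter> space M1 | A. A \<in> sets borel}) \<subseteq> sets M1"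
    by (auto intro: measurable_sets)
  moreover have "(\<Union>j\<in>{1..<i}. {T j -` A \<inter> space M1 | A. A \<in> sets borel}) \<subseteq> Pow (space M1)"
    by auto
  ultimately show ?thesis
    unfolding subalgebra_def past_algebra_def by (simp add: sets_measure_of space_measure_of sets.sigma_sets_subset)
qed

lemma T_in_past_algebra:
  assumes "1 \<le> j" "j < i" and "B \<in> sets borel"
  shows "{\<omega> \<in> space M1. T j \<omega> \<in> B} \<in> sets (past_algebra M1 T i)"
proof -
  let ?G = "\<Union>j\<in>{1..<i}. {T j -` A \<inter> space M1 | A. A \<in> sets borel}"
  have "?G \<subseteq> Pow (space M1)"
    by auto
  moreover have "T j -` B \<inter> space M1 \<in> ?G"
    using assms by (intro UN_I[of j]) auto
  moreover have "{\<omega> \<in> space M1. T j \<omega> \<in> B} = T j -` B \<inter> space M1"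
    by auto
  ultimately show ?thesis
    unfolding past_algebra_def by (simp add: sets_measure_of sigma_sets.Basic)
qed

lemma AE_real_cond_exp_T:
  "2 \<le> i \<Longrightarrow> AE \<omega> in M1. T (i - 1) \<omega> \<le> t \<longrightarrow>
    real_cond_exp M1 (past_algebra M1 T i) (indicator {\<omega> \<in> space M1. t < T i \<omega>}) \<omega>
      = survival F t / survival F (T (i - 1) \<omega>)"
  using minimal_repair unfolding minimal_repair_def by blast

lemma survival_ratio_bounds:
  assumes "x \<le> s"
  shows "0 < survival F s / survival F x" and "survival F s / survival F x \<le> 1"
  using survival_antimono[OF assms] survival_pos[of x] survival_pos[of s] by simp_all

lemma integrable_indicator_T_mult:
  fixes g :: "real \<Rightarrow> real"
  assumes "1 \<le> k" and "B \<in> sets borel" and "g \<in> borel_measurable borel"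
    and "\<And>x. x \<in> B \<Longrightarrow> \<bar>g x\<bar> \<le> C"
  shows "integrable M1 (\<lambda>\<omega>. indicator B (T k \<omega>) * g (T k \<omega>))"
proof (rule M1.integrable_const_bound[where B="max C 0"])
  show "AE \<omega> in M1. norm (indicator B (T k \<omega>) * g (T k \<omega>)) \<le> max C 0"
    using assms(4) by (simp add: indicator_def max.coboundedI1)
qed (use assms in measurable)

lemma integral_indicator_T:
  assumes "1 \<le> k" and "B \<in> sets borel"
  shows "(\<integral>\<omega>. indicator B (T k \<omega>) \<partial>M1) = measure M1 {\<omega> \<in> space M1. T k \<omega> \<in> B}"
proof -
  have "(\<integral>\<omega>. indicator B (T k \<omega>) \<partial>M1)
      = (\<integral>\<omega>. indicator {\<omega> \<in> space M1. T k \<omega> \<in> B} \<omega> \<partial>M1 :: real)"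
    by (intro Bochner_Integration.integral_cong) (auto simp: indicator_def)
  moreover have "{\<omega> \<in> space M1. T k \<omega> \<in> B} \<in> sets M1"
    using assms by measurable
  ultimately show ?thesis
    by (simp add: M1.emeasure_eq_measure)
qed

text \<open>The defining property of minimal repair, integrated over an event of the past.\<close>
lemma measure_step_gt_eq:
  assumes k: "1 \<le> k" and B: "B \<in> sets borel" and B_le: "\<And>x. x \<in> B \<Longrightarrow> x \<le> s"
  shows "measure M1 {\<omega> \<in> space M1. T k \<omega> \<in> B \<and> s < T (Suc k) \<omega>}
    = (\<integral>\<omega>. indicator B (T k \<omega>) * (survival F s / survival F (T k \<omega>)) \<partial>M1)"
proof -
  let ?G = "past_algebra M1 T (Suc k)"
  let ?A = "{\<omega> \<in> space M1. T k \<omega> \<in> B}"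
  let ?f = "indicator {\<omega> \<in> space M1. s < T (Suc k) \<omega>} :: 'b \<Rightarrow> real"
  let ?r = "\<lambda>x. survival F s / survival F x"
  have [measurable]: "T k \<in> borel_measurable M1" "T (Suc k) \<in> borel_measurable M1"
    using k by auto
  interpret G: sigma_finite_subalgebra M1 ?G
    by (rule finite_measure_subalgebra_is_sigma_finite)
      (simp add: finite_measure_subalgebra_def finite_measure_subalgebra_axioms_def
        subalgebra_past_algebra M1.finite_measure_axioms)
  have f: "integrable M1 ?f"
    by (rule integrable_real_indicator) (auto simp: M1.emeasure_eq_measure)
  have "AE \<omega> in M1. T k \<omega> \<le> s \<longrightarrow> real_cond_exp M1 ?G ?f \<omega> = ?r (T k \<omega>)"
    using AE_real_cond_exp_T[of "Suc k" s] k by simp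
  with AE_space have cond:
    "AE \<omega> in M1. indicator ?A \<omega> *\<^sub>R real_cond_exp M1 ?G ?f \<omega> = indicator B (T k \<omega>) * ?r (T k \<omega>)"
    by eventually_elim (auto simp: indicator_def B_le)
  have "(\<integral>\<omega>\<in>?A. ?f \<omega> \<partial>M1)
      = (\<integral>\<omega>. indicator {\<omega> \<in> space M1. T k \<omega> \<in> B \<and> s < T (Suc k) \<omega>} \<omega> \<partial>M1)"
    unfolding set_lebesgue_integral_def by (intro Bochner_Integration.integral_cong) (auto simp: indicator_def)
  then have "measure M1 {\<omega> \<in> space M1. T k \<omega> \<in> B \<and> s < T (Suc k) \<omega>} = (\<integral>\<omega>\<in>?A. ?f \<omega> \<partial>M1)"
    using B by simp
  also have "\<dots> = (\<integral>\<omega>\<in>?A. real_cond_exp M1 ?G ?f \<omega> \<partial>M1)"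
    by (rule G.real_cond_exp_intA[OF f T_in_past_algebra[OF k _ B]]) simp
  also have "\<dots> = (\<integral>\<omega>. indicator B (T k \<omega>) * ?r (T k \<omega>) \<partial>M1)"
    unfolding set_lebesgue_integral_def using cond B
    by (intro integral_cong_AE) (auto intro: borel_measurable_cond_exp2)
  finally show ?thesis .
qed

lemma measure_step_le_eq:
  assumes k: "1 \<le> k" and B: "B \<in> sets borel" and B_le: "\<And>x. x \<in> B \<Longrightarrow> x \<le> s"
  shows "measure M1 {\<omega> \<in> space M1. T k \<omega> \<in> B \<and> T (Suc k) \<omega> \<le> s}
    = (\<integral>\<omega>. indicator B (T k \<omega>) * (1 - survival F s / survival F (T k \<omega>)) \<partial>M1)"
proof -
  let ?r = "\<lambda>x. survival F s / survival F x"
  have [measurable]: "T k \<in> borel_measurable M1" "T (Suc k) \<in> borel_measurable M1"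
    using k by auto
  have r_bounds: "\<bar>?r x\<bar> \<le> 1" if "x \<in> B" for x
    using survival_ratio_bounds[OF B_le[OF that]] by auto
  have "measure M1 {\<omega> \<in> space M1. T k \<omega> \<in> B} = measure M1 {\<omega> \<in> space M1. T k \<omega> \<in> B \<and> T (Suc k) \<omega> \<le> s}
      + measure M1 {\<omega> \<in> space M1. T k \<omega> \<in> B \<and> s < T (Suc k) \<omega>}"
    using B by (subst M1.finite_measure_Union[symmetric]) (auto intro!: arg_cong[where f="measure M1"])
  then have "measure M1 {\<omega> \<in> space M1. T k \<omega> \<in> B \<and> T (Suc k) \<omega> \<le> s}
      = (\<integral>\<omega>. indicator B (T k \<omega>) \<partial>M1) - (\<integral>\<omega>. indicator B (T k \<omega>) * ?r (T k \<omega>) \<partial>M1)"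
    using integral_indicator_T[OF k B] measure_step_gt_eq[OF k B B_le] by simp
  also have "\<dots> = (\<integral>\<omega>. indicator B (T k \<omega>) * (1 - ?r (T k \<omega>)) \<partial>M1)"
    using integrable_indicator_T_mult[OF k B, where g="?r" and C=1] r_bounds
      integrable_indicator_T_mult[OF k B, where g="\<lambda>_. 1" and C=1]
    by (subst Bochner_Integration.integral_diff[symmetric]) (auto simp: right_diff_distrib)
  finally show ?thesis .
qed

lemma measure_step_le_le:
  assumes k: "1 \<le> k" and B: "B \<in> sets borel" and B_le: "\<And>x. x \<in> B \<Longrightarrow> x \<le> s"
    and c: "0 \<le> c" "\<And>x. x \<in> B \<Longrightarrow> 1 - survival F s / survival F x \<le> c"
  shows "measure M1 {\<omega> \<in> space M1. T k \<omega> \<in> B \<and> T (Suc k) \<omega> \<le> s}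
    \<le> c * measure M1 {\<omega> \<in> space M1. T k \<omega> \<in> B}"
proof -
  have [measurable]: "T k \<in> borel_measurable M1"
    using k by simp
  have "measure M1 {\<omega> \<in> space M1. T k \<omega> \<in> B \<and> T (Suc k) \<omega> \<le> s}
      = (\<integral>\<omega>. indicator B (T k \<omega>) * (1 - survival F s / survival F (T k \<omega>)) \<partial>M1)"
    by (rule measure_step_le_eq[OF k B B_le])
  also have "\<dots> \<le> (\<integral>\<omega>. indicator B (T k \<omega>) * c \<partial>M1)"
    using B c integrable_indicator_T_mult[OF k B, of "\<lambda>_. c"]
    by (intro integral_mono') (auto simp: indicator_def)
  also have "\<dots> = c * measure M1 {\<omega> \<in> space M1. T k \<omega> \<in> B}"
    using integral_indicator_T[OF k B] by simp
  finally show ?thesis .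
qed

lemma measure_step_le_interval_le:
  assumes k: "1 \<le> k" and "0 \<le> \<epsilon>"
    and F_close: "\<And>x. c \<le> x \<Longrightarrow> x < d \<Longrightarrow> F d - F x \<le> \<epsilon> * survival F x"
  shows "measure M1 {\<omega> \<in> space M1. T k \<omega> \<in> {c..<d} \<and> T (Suc k) \<omega> \<le> d}
    \<le> \<epsilon> * measure M1 {\<omega> \<in> space M1. T k \<omega> \<in> {c..<d}}"
proof (rule measure_step_le_le[OF k])
  fix x assume "x \<in> {c..<d}"
  then have "survival F x - survival F d \<le> \<epsilon> * survival F x"
    using F_close by (simp add: survival_def)
  then show "1 - survival F d / survival F x \<le> \<epsilon>"
    using survival_pos[of x] by (simp add: field_simps)
qed (use \<open>0 \<le> \<epsilon>\<close> in auto)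

lemma grid_cell_exists:
  fixes a h x :: real
  assumes "0 < h" and "a \<le> x" and "x < a + real m * h"
  obtains i where "i < m" and "a + real i * h \<le> x" and "x < a + real (Suc i) * h"
proof -
  define q where "q = (x - a) / h"
  have "0 \<le> q" "q < m" "x = a + q * h"
    using assms by (auto simp: q_def field_simps)
  define i where "i = nat \<lfloor>q\<rfloor>"
  have "real i \<le> q" "q < real i + 1"
    using \<open>0 \<le> q\<close> by (simp_all add: i_def)
  moreover from this have "real i * h \<le> q * h" "q * h < (real i + 1) * h"
    using \<open>0 < h\<close> by (simp_all add: mult_right_mono)
  ultimately show ?thesis
    using that[of i] \<open>q < m\<close> \<open>x = a + q * h\<close> by (auto simp: algebra_simps)
qed

text \<open>A descent \<open>T (Suc k) < T k\<close> with \<open>T k\<close> in a grid cell puts \<open>T (Suc k)\<close> below the right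
  end of that cell, which has small probability once the cells are short enough for \<open>F\<close>.\<close>
lemma measure_descent_le_grid:
  assumes k: "1 \<le> k" and "0 < \<epsilon>" and "0 < h"
    and F_close: "\<And>i x. i < m \<Longrightarrow> a + real i * h \<le> x \<Longrightarrow> x < a + real (Suc i) * h
      \<Longrightarrow> F (a + real (Suc i) * h) - F x \<le> \<epsilon> * survival F x"
  shows "measure M1 {\<omega> \<in> space M1. T (Suc k) \<omega> < T k \<omega> \<and> a \<le> T k \<omega> \<and> T k \<omega> < a + real m * h}
    \<le> \<epsilon>"
proof -
  have [measurable]: "T k \<in> borel_measurable M1" "T (Suc k) \<in> borel_measurable M1"
    using k by auto
  define g where "g i = a + real i * h" for i
  define I where "I i = {\<omega> \<in> space M1. T k \<omega> \<in> {g i..<g (Suc i)}}" for i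
  define E where "E i = {\<omega> \<in> space M1. T k \<omega> \<in> {g i..<g (Suc i)} \<and> T (Suc k) \<omega> \<le> g (Suc i)}" for i
  have "{\<omega> \<in> space M1. T (Suc k) \<omega> < T k \<omega> \<and> a \<le> T k \<omega> \<and> T k \<omega> < a + real m * h} \<subseteq> (\<Union>i<m. E i)"
  proof safe
    fix \<omega> assume \<omega>: "\<omega> \<in> space M1" "T (Suc k) \<omega> < T k \<omega>" "a \<le> T k \<omega>" "T k \<omega> < a + real m * h"
    then obtain i where "i < m" "g i \<le> T k \<omega>" "T k \<omega> < g (Suc i)"
      using grid_cell_exists[OF \<open>0 < h\<close>] unfolding g_def by metis
    then show "\<omega> \<in> (\<Union>i<m. E i)"
      using \<omega> by (auto simp: E_def)
  qed
  then have "measure M1 {\<omega> \<in> space M1. T (Suc k) \<omega> < T k \<omega> \<and> a \<le> T k \<omega> \<and> T k \<omega> < a + real m * h}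
      \<le> (\<Sum>i<m. measure M1 (E i))"
    by (intro order.trans[OF M1.finite_measure_mono M1.finite_measure_subadditive_finite])
      (auto simp: E_def)
  also have "\<dots> \<le> (\<Sum>i<m. \<epsilon> * measure M1 (I i))"
    unfolding E_def I_def g_def using \<open>0 < \<epsilon>\<close> F_close
    by (intro sum_mono measure_step_le_interval_le[OF k]) auto
  also have "\<dots> = \<epsilon> * measure M1 (\<Union>i<m. I i)"
  proof (subst M1.finite_measure_finite_Union)
    have "g (Suc i) \<le> g j" if "i < j" for i j
      using that \<open>0 < h\<close> by (simp add: g_def mult_right_mono)
    then show "disjoint_family_on I {..<m}"
      unfolding disjoint_family_on_def I_def by (fastforce simp: linorder_neq_iff)
  qed (auto simp: I_def sum_distrib_left)
  also have "\<dots> \<le> \<epsilon>"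
    using \<open>0 < \<epsilon>\<close> by (simp add: mult_left_le)
  finally show ?thesis .
qed

lemma measure_descent_le:
  assumes k: "1 \<le> k" and "a < b" and "0 < \<epsilon>"
  shows "measure M1 {\<omega> \<in> space M1. T (Suc k) \<omega> < T k \<omega> \<and> a \<le> T k \<omega> \<and> T k \<omega> < b} \<le> \<epsilon>"
proof -
  have "uniformly_continuous_on {a..b} F"
    by (rule compact_uniformly_continuous[OF continuous_on_subset[OF continuous_F]]) auto
  moreover have "0 < \<epsilon> * survival F b"
    using \<open>0 < \<epsilon>\<close> survival_pos by simp
  ultimately obtain \<delta> where "0 < \<delta>"
    and \<delta>: "\<And>x x'. x \<in> {a..b} \<Longrightarrow> x' \<in> {a..b} \<Longrightarrow> dist x' x < \<delta>
      \<Longrightarrow> dist (F x') (F x) < \<epsilon> * survival F b"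
    unfolding uniformly_continuous_on_def by metis
  obtain m :: nat where m: "(b - a) / \<delta> < m"
    using reals_Archimedean2 by blast
  then have "0 < m"
    using \<open>a < b\<close> \<open>0 < \<delta>\<close> by (metis divide_pos_pos diff_gt_0_iff_gt of_nat_0_less_iff order.strict_trans)
  define h where "h = (b - a) / m"
  have "0 < h" "h < \<delta>" "a + real m * h = b"
    using m \<open>0 < m\<close> \<open>a < b\<close> \<open>0 < \<delta>\<close> by (auto simp: h_def field_simps)
  have "F (a + real (Suc i) * h) - F x \<le> \<epsilon> * survival F x"
    if "i < m" "a + real i * h \<le> x" "x < a + real (Suc i) * h" for i x
  proof -
    have cell_le: "a + real (Suc i) * h \<le> a + real m * h"
      using that(1) \<open>0 < h\<close> by (intro add_left_mono mult_right_mono) auto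
    moreover have "a \<le> a + real i * h"
      using \<open>0 < h\<close> by simp
    moreover have "dist (a + real (Suc i) * h) x < \<delta>"
      using that(2,3) \<open>h < \<delta>\<close> by (simp add: dist_real_def algebra_simps)
    ultimately have "F (a + real (Suc i) * h) - F x < \<epsilon> * survival F b"
      using that \<delta>[of x "a + real (Suc i) * h"] \<open>a + real m * h = b\<close> by (simp add: dist_real_def)
    also have "\<dots> \<le> \<epsilon> * survival F x"
      using that(3) cell_le \<open>a + real m * h = b\<close> \<open>0 < \<epsilon>\<close> by (intro mult_left_mono survival_antimono) auto
    finally show ?thesis
      by simp
  qed
  then have "measure M1 {\<omega> \<in> space M1. T (Suc k) \<omega> < T k \<omega> \<and> a \<le> T k \<omega> \<and> T k \<omega> < a + real m * h}
      \<le> \<epsilon>"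
    by (rule measure_descent_le_grid[OF k \<open>0 < \<epsilon>\<close> \<open>0 < h\<close>])
  then show ?thesis
    using \<open>a + real m * h = b\<close> by simp
qed

lemma AE_T_le_T_Suc:
  assumes k: "1 \<le> k"
  shows "AE \<omega> in M1. T k \<omega> \<le> T (Suc k) \<omega>"
proof -
  have [measurable]: "T k \<in> borel_measurable M1" "T (Suc k) \<in> borel_measurable M1"
    using k by auto
  define D where "D n = {\<omega> \<in> space M1.
    T (Suc k) \<omega> < T k \<omega> \<and> - real (Suc n) \<le> T k \<omega> \<and> T k \<omega> < real (Suc n)}" for n
  have D_sets: "D n \<in> sets M1" for n
    unfolding D_def by measurable
  have D_le: "measure M1 (D n) \<le> 0" for n
  proof (rule field_le_epsilon)
    fix e :: real assume "0 < e"
    then show "measure M1 (D n) \<le> 0 + e"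
      unfolding D_def using measure_descent_le[OF k, of "- real (Suc n)" "real (Suc n)" e] by simp
  qed
  have "emeasure M1 (D n) = 0" for n
    using D_le[of n] measure_nonneg[of M1 "D n"] by (simp add: M1.emeasure_eq_measure)
  moreover have "{\<omega> \<in> space M1. T (Suc k) \<omega> < T k \<omega>} = (\<Union>n. D n)"
  proof (intro set_eqI iffI)
    fix \<omega> assume \<omega>: "\<omega> \<in> {\<omega> \<in> space M1. T (Suc k) \<omega> < T k \<omega>}"
    obtain n :: nat where "\<bar>T k \<omega>\<bar> < real n"
      using reals_Archimedean2 by blast
    then have "\<omega> \<in> D n"
      using \<omega> by (auto simp: D_def abs_less_iff)
    then show "\<omega> \<in> (\<Union>n. D n)"
      by blast
  qed (auto simp: D_def)
  ultimately have "emeasure M1 {\<omega> \<in> space M1. T (Suc k) \<omega> < T k \<omega>} = 0"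
    using D_sets by (auto intro: emeasure_UN_eq_0)
  then show ?thesis
    by (subst AE_iff_measurable[where N="{\<omega> \<in> space M1. T (Suc k) \<omega> < T k \<omega>}"]) auto
qed

lemma AE_T_incseq: "AE \<omega> in M1. incseq (\<lambda>n. T (Suc n) \<omega>)"
proof -
  have "AE \<omega> in M1. \<forall>n. T (Suc n) \<omega> \<le> T (Suc (Suc n)) \<omega>"
    by (subst AE_all_countable) (simp add: AE_T_le_T_Suc)
  then show ?thesis
    by eventually_elim (rule incseq_SucI, simp)
qed

lemma measure_T_le_le_power: "1 \<le> k \<Longrightarrow> measure M1 {\<omega> \<in> space M1. T k \<omega> \<le> t} \<le> F t ^ k"
proof (induction k rule: nat_induct_at_least)
  case base
  then show ?case
    using measure_T1_le[of t] by simp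
next
  case (Suc k)
  have [measurable]: "T k \<in> borel_measurable M1" "T (Suc k) \<in> borel_measurable M1"
    using Suc by auto
  have "measure M1 {\<omega> \<in> space M1. T (Suc k) \<omega> \<le> t}
      \<le> measure M1 {\<omega> \<in> space M1. T k \<omega> \<in> {..t} \<and> T (Suc k) \<omega> \<le> t}"
    using AE_T_le_T_Suc[OF Suc(1)]
    by (intro M1.finite_measure_mono_AE) (auto elim!: eventually_mono)
  also have "\<dots> \<le> F t * measure M1 {\<omega> \<in> space M1. T k \<omega> \<in> {..t}}"
  proof (rule measure_step_le_le[OF Suc(1)])
    fix x
    have "survival F t * survival F x \<le> survival F t"
      using survival_le_1[of x] survival_pos[of t] by (simp add: mult_left_le)
    then have "survival F t \<le> survival F t / survival F x"
      using survival_pos[of x] by (simp add: le_divide_eq)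
    then show "1 - survival F t / survival F x \<le> F t"
      by (simp add: survival_def)
  qed (auto simp: F_nonneg)
  also have "\<dots> \<le> F t * F t ^ k"
    using Suc(2) F_nonneg[of t] by (intro mult_left_mono) auto
  finally show ?case
    by simp
qed

lemma AE_finite_failures: "AE \<omega> in M1. finite {n. 1 \<le> n \<and> T n \<omega> \<le> t}"
proof -
  define C where "C = (\<Inter>m. {\<omega> \<in> space M1. T (Suc m) \<omega> \<le> t})"
  have C_sets: "C \<in> sets M1"
    unfolding C_def by measurable
  have "measure M1 C \<le> F t ^ Suc m" for m
  proof -
    have "measure M1 C \<le> measure M1 {\<omega> \<in> space M1. T (Suc m) \<omega> \<le> t}"
      unfolding C_def by (intro M1.finite_measure_mono) auto
    also have "\<dots> \<le> F t ^ Suc m"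
      by (rule measure_T_le_le_power) simp
    finally show ?thesis .
  qed
  moreover have "(\<lambda>m. F t ^ Suc m) \<longlonglongrightarrow> 0"
    using survival_pos[of t] F_nonneg[of t] by (intro LIMSEQ_Suc LIMSEQ_power_zero) (auto simp: survival_def)
  ultimately have "measure M1 C \<le> 0"
    by (intro LIMSEQ_le_const[where X="\<lambda>m. F t ^ Suc m"]) auto
  then have "emeasure M1 C = 0"
    using measure_nonneg[of M1 C] by (simp add: M1.emeasure_eq_measure)
  then have "AE \<omega> in M1. \<omega> \<notin> C"
    using C_sets sets.sets_into_space by (subst AE_iff_measurable[where N=C]) auto
  then show ?thesis
    using AE_T_incseq AE_space
  proof eventually_elim
    case (elim \<omega>)
    then obtain m where m: "t < T (Suc m) \<omega>"
      by (auto simp: C_def not_le)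
    have "n \<le> m" if "1 \<le> n" "T n \<omega> \<le> t" for n
    proof (rule ccontr)
      assume "\<not> n \<le> m"
      then have "T (Suc m) \<omega> \<le> T n \<omega>"
        using incseqD[OF elim(2), of m "n - 1"] by simp
      then show False
        using m that(2) by simp
    qed
    then have "{n. 1 \<le> n \<and> T n \<omega> \<le> t} \<subseteq> {..m}"
      by auto
    then show ?case
      by (rule finite_subset) simp
  qed
qed

lemma measurable_N_MR: "N_MR T t \<in> M1 \<rightarrow>\<^sub>M count_space UNIV"
  unfolding N_MR_def[abs_def]
proof (rule measurable_Sup_nat)
  fix i :: nat
  show "Measurable.pred M1 (\<lambda>\<omega>. i \<in> insert 0 {n. 1 \<le> n \<and> T n \<omega> \<le> t})"
    by (cases "i = 0") simp_all
qed

lemma emeasure_T_le_le_N_MR: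
  assumes "1 \<le> k"
  shows "emeasure M1 {\<omega> \<in> space M1. T k \<omega> \<le> t} \<le> emeasure M1 {\<omega> \<in> space M1. k \<le> N_MR T t \<omega>}"
proof (rule emeasure_mono_AE)
  show "{\<omega> \<in> space M1. k \<le> N_MR T t \<omega>} \<in> sets M1"
    using measurable_N_MR[of t] by measurable
  show "AE \<omega> in M1. \<omega> \<in> {\<omega> \<in> space M1. T k \<omega> \<le> t}
      \<longrightarrow> \<omega> \<in> {\<omega> \<in> space M1. k \<le> N_MR T t \<omega>}"
    using AE_finite_failures[of t]
  proof eventually_elim
    case (elim \<omega>)
    then show ?case
      using assms by (auto simp: N_MR_def intro: le_cSup_finite)
  qed
qed

end

locale nbu_minimal_repair = nbu_lifetime nu + minimal_repair_process M1 "cdf nu" T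
  for nu :: "real measure" and M1 :: "'b measure" and T :: "nat \<Rightarrow> 'b \<Rightarrow> real"
begin

lemma AE_T_nonneg: "AE \<omega> in M1. \<forall>k\<ge>1. 0 \<le> T k \<omega>"
proof -
  have "distr M1 borel (T 1) = nu"
  proof (rule cdf_unique)
    show "real_distribution (distr M1 borel (T 1))" "real_distribution nu"
      by (simp_all add: real_distribution_axioms)
    show "cdf (distr M1 borel (T 1)) = cdf nu"
      using measure_T1_le by (auto simp: cdf_def measure_distr vimage_def Int_def conj_commute)
  qed
  moreover have "emeasure M1 {\<omega> \<in> space M1. T 1 \<omega> < 0} = emeasure (distr M1 borel (T 1)) {..<0}"
    by (subst emeasure_distr) (auto simp: vimage_def Int_def conj_commute)
  ultimately have "emeasure M1 {\<omega> \<in> space M1. T 1 \<omega> < 0} = 0"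
    by (simp add: emeasure_negative)
  then have "AE \<omega> in M1. 0 \<le> T 1 \<omega>"
    by (subst AE_iff_measurable[where N="{\<omega> \<in> space M1. T 1 \<omega> < 0}"]) auto
  then show ?thesis
    using AE_T_incseq
  proof eventually_elim
    case (elim \<omega>)
    show ?case
    proof (intro allI impI)
      fix k :: nat assume "1 \<le> k"
      then show "0 \<le> T k \<omega>"
        using elim incseqD[OF elim(2), of 0 "k - 1"] by simp
    qed
  qed
qed

lemma conv_cdf_le_emeasure_T: "1 \<le> k \<Longrightarrow> conv_cdf nu k t \<le> emeasure M1 {\<omega> \<in> space M1. T k \<omega> \<le> t}"
proof (induction k arbitrary: t rule: nat_induct_at_least)
  case base
  then show ?case
    using measure_T1_le[of t] conv_cdf_one[of t] by (simp add: M1.emeasure_eq_measure del: conv_cdf.simps)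
next
  case (Suc k)
  have [measurable]: "T k \<in> borel_measurable M1" "T (Suc k) \<in> borel_measurable M1"
    using Suc by auto
  let ?r = "\<lambda>x. 1 - survival (cdf nu) t / survival (cdf nu) x"
  have "conv_cdf nu (Suc k) t \<le> (\<integral>\<^sup>+x. emeasure M1 {\<omega> \<in> space M1. T k \<omega> \<le> t - x} \<partial>nu)"
    by (simp add: nn_integral_mono Suc.IH)
  also have "\<dots> = (\<integral>\<^sup>+\<omega>. ennreal (cdf nu (t - T k \<omega>)) \<partial>M1)"
    by (rule nn_integral_emeasure_le_diff) (simp_all add: M1.prob_space_axioms)
  also have "\<dots> = ennreal (\<integral>\<omega>. cdf nu (t - T k \<omega>) \<partial>M1)"
    by (intro nn_integral_eq_integral M1.integrable_const_bound[where B=1]) (auto simp: cdf_nonneg cdf_bounded_prob)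
  also have "\<dots> \<le> ennreal (\<integral>\<omega>. indicator {..t} (T k \<omega>) * ?r (T k \<omega>) \<partial>M1)"
  proof (intro ennreal_leI integral_mono_AE')
    show "integrable M1 (\<lambda>\<omega>. indicator {..t} (T k \<omega>) * ?r (T k \<omega>))"
      using survival_ratio_bounds by (intro integrable_indicator_T_mult[OF Suc(1), where C=1]) (auto simp: less_imp_le)
    show "AE \<omega> in M1. cdf nu (t - T k \<omega>) \<le> indicator {..t} (T k \<omega>) * ?r (T k \<omega>)"
      using AE_T_nonneg
      by eventually_elim (use Suc(1) in \<open>auto simp: indicator_def cdf_negative survival_pos
          intro!: cdf_diff_le_survival_ratio\<close>)
    show "AE \<omega> in M1. 0 \<le> indicator {..t} (T k \<omega>) * ?r (T k \<omega>)"
      using survival_ratio_bounds(2) by (auto simp: indicator_def)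
  qed
  also have "\<dots> = ennreal (measure M1 {\<omega> \<in> space M1. T k \<omega> \<in> {..t} \<and> T (Suc k) \<omega> \<le> t})"
    by (subst measure_step_le_eq[OF Suc(1)]) auto
  also have "\<dots> \<le> emeasure M1 {\<omega> \<in> space M1. T (Suc k) \<omega> \<le> t}"
    by (simp add: M1.emeasure_eq_measure M1.finite_measure_mono Collect_mono_iff)
  finally show ?case .
qed

end

lemma nbu_minimal_repair_if_minimal_repair:
  assumes nbu: "nbu_lifetime nu" and "prob_space M1" and "minimal_repair M1 (cdf nu) T"
    and "continuous_on UNIV (cdf nu)" and survival_pos: "\<forall>t\<ge>0. 0 < survival (cdf nu) t"
  shows "nbu_minimal_repair nu M1 T"
proof (intro nbu_minimal_repair.intro[OF nbu] minimal_repair_process.intro[OF assms(2)]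
    minimal_repair_process_axioms.intro assms(3,4))
  show "0 < survival (cdf nu) t" for t
    using survival_pos nbu_lifetime.cdf_negative[OF nbu, of t] by (cases "0 \<le> t") (auto simp: survival_def)
qed

lemma survival_eq_measure_greater:
  assumes "prob_space M" and "has_cdf M X F"
  shows "survival F t = measure M {\<omega> \<in> space M. t < X \<omega>}"
proof -
  interpret prob_space M
    by fact
  have [measurable]: "X \<in> borel_measurable M"
    using assms(2) by (simp add: has_cdf_def)
  have "{\<omega> \<in> space M. t < X \<omega>} = space M - {\<omega> \<in> space M. X \<omega> \<le> t}"
    by auto
  then show ?thesis
    using assms(2) prob_compl[of "{\<omega> \<in> space M. X \<omega> \<le> t}"] by (simp add: survival_def has_cdf_def)
qed

lemma NBU_survival_add_le:
  assumes M: "prob_space M" and X: "has_cdf M X F" and "NBU M X" and "0 \<le> a" "0 \<le> b"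
  shows "survival F (a + b) \<le> survival F a * survival F b"
proof -
  interpret prob_space M
    by fact
  have [measurable]: "X \<in> borel_measurable M"
    using X by (simp add: has_cdf_def)
  have "measure M {\<omega> \<in> space M. b < X \<omega> - a \<and> a < X \<omega>} / measure M {\<omega> \<in> space M. a < X \<omega>}
      \<le> measure M {\<omega> \<in> space M. b < X \<omega>}"
    using \<open>NBU M X\<close> \<open>0 \<le> a\<close> unfolding NBU_def by blast
  moreover have "{\<omega> \<in> space M. b < X \<omega> - a \<and> a < X \<omega>} = {\<omega> \<in> space M. a + b < X \<omega>}"
    using \<open>0 \<le> b\<close> by auto
  ultimately have ratio: "survival F (a + b) / survival F a \<le> survival F b"
    by (simp add: survival_eq_measure_greater[OF M X])
  have "survival F (a + b) \<le> survival F a"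
    using \<open>0 \<le> b\<close> unfolding survival_eq_measure_greater[OF M X] by (intro finite_measure_mono) auto
  moreover have "0 \<le> survival F a"
    by (simp add: survival_eq_measure_greater[OF M X])
  ultimately show ?thesis
    using ratio by (cases "survival F a = 0") (auto simp: divide_le_eq mult.commute)
qed

lemma nbu_lifetime_distr:
  assumes M: "prob_space M" and X: "has_cdf M X F" and "AE \<omega> in M. 0 \<le> X \<omega>" and "NBU M X"
  shows "nbu_lifetime (distr M borel X)" and "cdf (distr M borel X) = F"
proof -
  interpret prob_space M
    by fact
  have [measurable]: "X \<in> borel_measurable M"
    using X by (simp add: has_cdf_def)
  show cdf_eq: "cdf (distr M borel X) = F"
    using X by (auto simp: cdf_def measure_distr has_cdf_def vimage_def Int_def conj_commute)
  have "emeasure M {\<omega> \<in> space M. X \<omega> < 0} = 0"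
    using \<open>AE \<omega> in M. 0 \<le> X \<omega>\<close>
    by (subst (asm) AE_iff_measurable[where N="{\<omega> \<in> space M. X \<omega> < 0}"]) auto
  then have "emeasure (distr M borel X) {..<0} = 0"
    by (subst emeasure_distr) (auto simp: vimage_def Int_def conj_commute)
  then show "nbu_lifetime (distr M borel X)"
    using NBU_survival_add_le[OF M X \<open>NBU M X\<close>]
    by (intro nbu_lifetime.intro nbu_lifetime_axioms.intro) (auto simp: cdf_eq)
qed

lemma measure_real_greater_le_if_tails_le:
  fixes N :: "'a \<Rightarrow> nat" and N' :: "'b \<Rightarrow> nat"
  assumes "prob_space M" and "prob_space M'"
    and tails: "\<And>k. 1 \<le> k \<Longrightarrow>
      emeasure M {\<omega> \<in> space M. k \<le> N \<omega>} \<le> emeasure M' {\<omega> \<in> space M'. k \<le> N' \<omega>}"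
  shows "measure M {\<omega> \<in> space M. s < real (N \<omega>)} \<le> measure M' {\<omega> \<in> space M'. s < real (N' \<omega>)}"
proof -
  interpret M: prob_space M
    by fact
  interpret M': prob_space M'
    by fact
  show ?thesis
  proof (cases "s < 0")
    case True
    then have "{\<omega> \<in> space M'. s < real (N' \<omega>)} = space M'"
      by (auto intro: less_le_trans)
    then show ?thesis
      by (simp add: M.prob_le_1 M'.prob_space)
  next
    case False
    define k where "k = Suc (nat \<lfloor>s\<rfloor>)"
    have "s < real n \<longleftrightarrow> k \<le> n" for n
      using False unfolding k_def by linarith
    then have "enn2real (emeasure M {\<omega> \<in> space M. s < real (N \<omega>)})
        \<le> enn2real (emeasure M' {\<omega> \<in> space M'. s < real (N' \<omega>)})"
      using tails[of k] by (intro enn2real_mono) (auto simp: k_def M'.emeasure_finite less_top[symmetric])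
    then show ?thesis
      by (simp add: measure_def)
  qed
qed

theorem mainTheorem6:
  fixes M :: "'a measure" and X :: "'a \<Rightarrow> real" and F :: "real \<Rightarrow> real"
    and M1 :: "'b measure" and T :: "nat \<Rightarrow> 'b \<Rightarrow> real"
    and M2 :: "'c measure" and Y :: "nat \<Rightarrow> 'c \<Rightarrow> real" and K :: real
  assumes "prob_space M" and "has_cdf M X F"
    and "AE \<omega> in M. X \<omega> \<ge> 0"
    and "continuous_on UNIV F"
    and "NBU M X"
    and "\<forall>t\<ge>0. survival F t > 0"
    and "K > 0"
    and "prob_space M1" and "minimal_repair M1 F T"
    and "prob_space M2" and "iid_lifetimes M2 F Y"
  shows "\<forall>t\<ge>0. \<forall>s::real.
     measure M2 {\<omega> \<in> space M2. real (N_AR K Y t \<omega>) > s}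
       \<le> measure M1 {\<omega> \<in> space M1. real (N_MR T t \<omega>) > s}"
proof (intro allI impI)
  fix t s :: real
  define nu where "nu = distr M borel X"
  have nbu: "nbu_lifetime nu" and F: "cdf nu = F"
    unfolding nu_def using assms(1-3,5) by (rule nbu_lifetime_distr)+
  interpret AR: nbu_age_replacement nu M2 Y K
    using nbu assms(7,10,11) by (intro nbu_age_replacement_if_iid_lifetimes) (simp_all add: F)
  interpret MR: nbu_minimal_repair nu M1 T
    using nbu assms(4,6,8,9) by (intro nbu_minimal_repair_if_minimal_repair) (simp_all add: F)
  show "measure M2 {\<omega> \<in> space M2. real (N_AR K Y t \<omega>) > s}
      \<le> measure M1 {\<omega> \<in> space M1. real (N_MR T t \<omega>) > s}"
    using AR.emeasure_N_AR_ge_le MR.conv_cdf_le_emeasure_T MR.emeasure_T_le_le_N_MR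
    by (intro measure_real_greater_le_if_tails_le[OF assms(10,8)]) (meson order.trans)
qed

end
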